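(* Let $(S^\Omega,\mathcal T)$ be a resource theory with a fair currency $\mathcal C$ (value function $\mathrm{Val}$) for a target $\mathcal S$. Then for every $V\in\mathcal S$, $$\mathrm{Cost}(V)=-\mathrm{Balance}(\Omega\to V),\qquad \mathrm{Yield}(V)=\mathrm{Balance}(V\to\Omega).$$
   Context: A resource theory $(S^\Omega,\mathcal T)$ consists of a set $\Omega$, the specification space $S^\Omega$ of all non-empty subsets of $\Omega$ (resources), and a set $\mathcal T$ of maps $f:S^\Omega\to S^\Omega$ acting element-wise, $f(V)=\bigcup_{\nu\in V} f(\{\nu\})$. $V\to W$ iff some $f\in\mathcal T$ has $f(V)\subseteq W$; $\to$ is assumed to be a pre-order. $\mathcal C\subseteq S^\Omega$ is a currency for target $\mathcal S\subseteq S^\Omega$ if (Order) any two elements of $\mathcal C$ are comparable under $\to$ and $\Omega\in\mathcal C$; (Universality) $\Omega\in\mathcal S$ and every $V\in\mathcal S$ has $C,C'\in\mathcal C$ with $C\to V$, $V\to C'$. A value function $\mathrm{Val}:\mathcal C\to\mathbb R_{\ge0}$ satisfies $\mathrm{Val}(C')\ge\mathrm{Val}(C)\iff C'\to C$ and $\mathrm{Val}(\Omega)=0$; $c_{\sup}=\sup_{C\in\mathcal C}\mathrm{Val}(C)$ (possibly $\infty$). $\mathrm{Cost}(V)=\inf\{\mathrm{Val}(C): C\in\mathcal C,\ C\to V\}$, $\mathrm{Yield}(V)=\sup\{\mathrm{Val}(C): C\in\mathcal C,\ V\to C\}$. Independence: $C\cap V\ne\emptyset$ for all $C\in\mathcal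 C,V\in\mathcal S$, and $C\to C'$ implies $C\cap V\to C'\cap V$ for all $V\in\mathcal S$. Balance: $\mathrm{Balance}(V\to W\mid C)=\sup\{\mathrm{Val}(C')-\mathrm{Val}(C): C'\in\mathcal C,\ V\cap C\to W\cap C'\}$ (with $\sup\emptyset=-\infty$) and $\mathrm{Balance}(V\to W)=\sup_{C\in\mathcal C}\mathrm{Balance}(V\to W\mid C)$. Fairness: $\mathcal C$ is independent of $\mathcal S$, and for all $V,W\in\mathcal S$ and $C_1,C_2\in\mathcal C$ with $V\cap C_1\to W\cap C_2$, setting $\Delta=\mathrm{Val}(C_2)-\mathrm{Val}(C_1)$: (F1) for every $C_1'\in\mathcal C$ with $-\Delta\le\mathrm{Val}(C_1')<c_{\sup}-\Delta$ there is $C_2'\in\mathcal C$ with $V\cap C_1'\to W\cap C_2'$ and $\mathrm{Val}(C_2')-\mathrm{Val}(C_1')=\Delta$; (F2) for every $C_2'\in\mathcal C$ with $\Delta\le\mathrm{Val}(C_2')$ there is $C_1'\in\mathcal C$ with $V\cap C_1'\to W\cap C_2'$ and $\mathrm{Val}(C_2')-\mathrm{Val}(C_1')=\Delta$. *)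

theory Defs
  imports Complex_Main "HOL-Library.Extended_Real"
begin

definition spec :: "'a set \<Rightarrow> 'a set set" where
  "spec Omega = {V. V \<subseteq> Omega \<and> V \<noteq> {}}"

definition conv :: "('a set \<Rightarrow> 'a set) set \<Rightarrow> 'a set \<Rightarrow> 'a set \<Rightarrow> bool" where
  "conv T V W \<longleftrightarrow> (\<exists>f\<in>T. f V \<subseteq> W)"

definition resource_theory :: "'a set \<Rightarrow> ('a set \<Rightarrow> 'a set) set \<Rightarrow> bool" where
  "resource_theory Omega T \<longleftrightarrow>
     (\<forall>f\<in>T. \<forall>V\<in>spec Omega. f V \<in> spec Omega \<and> f V = (\<Union>\<nu>\<in>V. f {\<nu>})) \<and>
     (\<forall>V\<in>spec Omega. conv T V V) \<and>
     (\<forall>U\<in>spec Omega. \<forall>V\<in>spec Omega. \<forall>W\<in>spec Omega.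
        conv T U V \<longrightarrow> conv T V W \<longrightarrow> conv T U W)"

definition currency ::
  "'a set \<Rightarrow> ('a set \<Rightarrow> 'a set) set \<Rightarrow> 'a set set \<Rightarrow> 'a set set \<Rightarrow> bool" where
  "currency Omega T Cur Tgt \<longleftrightarrow>
     Cur \<subseteq> spec Omega \<and> Tgt \<subseteq> spec Omega \<and>
     (\<forall>C\<in>Cur. \<forall>C'\<in>Cur. conv T C C' \<or> conv T C' C) \<and> Omega \<in> Cur \<and>
     Omega \<in> Tgt \<and>
     (\<forall>V\<in>Tgt. \<exists>C\<in>Cur. \<exists>C'\<in>Cur. conv T C V \<and> conv T V C')"

definition value_function ::
  "'a set \<Rightarrow> ('a set \<Rightarrow> 'a set) set \<Rightarrow> 'a set set \<Rightarrow> ('a set \<Rightarrow> real) \<Rightarrow> bool" where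
  "value_function Omega T Cur Val \<longleftrightarrow>
     (\<forall>C\<in>Cur. Val C \<ge> 0) \<and>
     (\<forall>C\<in>Cur. \<forall>C'\<in>Cur. Val C' \<ge> Val C \<longleftrightarrow> conv T C' C) \<and>
     Val Omega = 0"

definition c_sup :: "'a set set \<Rightarrow> ('a set \<Rightarrow> real) \<Rightarrow> ereal" where
  "c_sup Cur Val = (SUP C\<in>Cur. ereal (Val C))"

definition Cost ::
  "('a set \<Rightarrow> 'a set) set \<Rightarrow> 'a set set \<Rightarrow> ('a set \<Rightarrow> real) \<Rightarrow> 'a set \<Rightarrow> ereal" where
  "Cost T Cur Val V = (INF C\<in>{C\<in>Cur. conv T C V}. ereal (Val C))"

definition Yield ::
  "('a set \<Rightarrow> 'a set) set \<Rightarrow> 'a set set \<Rightarrow> ('a set \<Rightarrow> real) \<Rightarrow> 'a set \<Rightarrow> ereal" where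
  "Yield T Cur Val V = (SUP C\<in>{C\<in>Cur. conv T V C}. ereal (Val C))"

text \<open>Balance given currency C; SUP over the empty set is -infinity in ereal.\<close>
definition Balance_given ::
  "('a set \<Rightarrow> 'a set) set \<Rightarrow> 'a set set \<Rightarrow> ('a set \<Rightarrow> real) \<Rightarrow> 'a set \<Rightarrow> 'a set \<Rightarrow> 'a set \<Rightarrow> ereal" where
  "Balance_given T Cur Val V W C =
     (SUP C'\<in>{C'\<in>Cur. conv T (V \<inter> C) (W \<inter> C')}. ereal (Val C' - Val C))"

definition Balance ::
  "('a set \<Rightarrow> 'a set) set \<Rightarrow> 'a set set \<Rightarrow> ('a set \<Rightarrow> real) \<Rightarrow> 'a set \<Rightarrow> 'a set \<Rightarrow> ereal" where
  "Balance T Cur Val V W = (SUP C\<in>Cur. Balance_given T Cur Val V W C)"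

definition independent ::
  "('a set \<Rightarrow> 'a set) set \<Rightarrow> 'a set set \<Rightarrow> 'a set set \<Rightarrow> bool" where
  "independent T Cur Tgt \<longleftrightarrow>
     (\<forall>C\<in>Cur. \<forall>V\<in>Tgt. C \<inter> V \<noteq> {}) \<and>
     (\<forall>C\<in>Cur. \<forall>C'\<in>Cur. conv T C C' \<longrightarrow> (\<forall>V\<in>Tgt. conv T (C \<inter> V) (C' \<inter> V)))"

definition fair ::
  "('a set \<Rightarrow> 'a set) set \<Rightarrow> 'a set set \<Rightarrow> 'a set set \<Rightarrow> ('a set \<Rightarrow> real) \<Rightarrow> bool" where
  "fair T Cur Tgt Val \<longleftrightarrow>
     independent T Cur Tgt \<and>
     (\<forall>V\<in>Tgt. \<forall>W\<in>Tgt. \<forall>C1\<in>Cur. \<forall>C2\<in>Cur.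
        conv T (V \<inter> C1) (W \<inter> C2) \<longrightarrow>
        (let \<Delta> = Val C2 - Val C1 in
          (\<forall>C1'\<in>Cur. - \<Delta> \<le> Val C1' \<and> ereal (Val C1') < c_sup Cur Val - ereal \<Delta> \<longrightarrow>
             (\<exists>C2'\<in>Cur. conv T (V \<inter> C1') (W \<inter> C2') \<and> Val C2' - Val C1' = \<Delta>)) \<and>
          (\<forall>C2'\<in>Cur. \<Delta> \<le> Val C2' \<longrightarrow>
             (\<exists>C1'\<in>Cur. conv T (V \<inter> C1') (W \<inter> C2') \<and> Val C2' - Val C1' = \<Delta>))))"

end

theory Submission
  imports Defs
begin

text \<open>Every currency element and every target lies inside \<open>\<Omega>\<close>, so a conversion
  \<open>\<Omega> \<inter> C \<rightarrow> V \<inter> C'\<close> is just \<open>C \<rightarrow> V \<inter> C'\<close>, and \<open>V \<inter> C \<rightarrow> \<Omega> \<inter> C'\<close> is \<open>V \<inter> C \<rightarrow> C'\<close>.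
  For the cost, fairness (F2) moves the final currency of such a conversion to \<open>\<Omega>\<close>, which
  turns any witness of the balance \<open>\<Omega> \<rightarrow> V\<close> into a currency element converting to \<open>V\<close>
  whose value is the loss. For the yield, (F1) moves the initial currency to \<open>\<Omega>\<close>; it applies
  unless the gain reaches \<open>c_sup\<close>, in which case the initial currency is worthless and
  independence lets \<open>V\<close> itself pay for the final one.\<close>

lemma conv_mono_right: "conv T A B \<Longrightarrow> B \<subseteq> B' \<Longrightarrow> conv T A B'"
  unfolding conv_def by (meson order_trans)

lemma Balance_upper:
  assumes "C \<in> Cur" "C' \<in> Cur" "conv T (V \<inter> C) (W \<inter> C')"
  shows "ereal (Val C' - Val C) \<le> Balance T Cur Val V W"
proof -
  have "ereal (Val C' - Val C) \<le> Balance_given T Cur Val V W C"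
    unfolding Balance_given_def using assms by (intro SUP_upper) auto
  also have "\<dots> \<le> Balance T Cur Val V W"
    unfolding Balance_def using assms(1) by (rule SUP_upper)
  finally show ?thesis .
qed

lemma Balance_least:
  assumes "\<And>C C'. C \<in> Cur \<Longrightarrow> C' \<in> Cur \<Longrightarrow> conv T (V \<inter> C) (W \<inter> C') \<Longrightarrow>
             ereal (Val C' - Val C) \<le> b"
  shows "Balance T Cur Val V W \<le> b"
  unfolding Balance_def Balance_given_def using assms by (auto intro!: SUP_least)

lemma Cost_lower: "C \<in> Cur \<Longrightarrow> conv T C V \<Longrightarrow> Cost T Cur Val V \<le> ereal (Val C)"
  unfolding Cost_def by (rule INF_lower) simp

lemma Cost_greatest:
  "(\<And>C. C \<in> Cur \<Longrightarrow> conv T C V \<Longrightarrow> b \<le> ereal (Val C)) \<Longrightarrow> b \<le> Cost T Cur Val V"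
  unfolding Cost_def by (rule INF_greatest) simp

lemma Yield_upper: "C \<in> Cur \<Longrightarrow> conv T V C \<Longrightarrow> ereal (Val C) \<le> Yield T Cur Val V"
  unfolding Yield_def by (rule SUP_upper) simp

lemma Yield_least:
  "(\<And>C. C \<in> Cur \<Longrightarrow> conv T V C \<Longrightarrow> ereal (Val C) \<le> b) \<Longrightarrow> Yield T Cur Val V \<le> b"
  unfolding Yield_def by (rule SUP_least) simp

locale fair_currency =
  fixes Omega :: "'a set" and T :: "('a set \<Rightarrow> 'a set) set"
    and Cur Tgt :: "'a set set" and Val :: "'a set \<Rightarrow> real"
  assumes currency: "currency Omega T Cur Tgt"
    and value_function: "value_function Omega T Cur Val"
    and fair: "fair T Cur Tgt Val"
begin

lemma Omega_in_Cur: "Omega \<in> Cur" and Omega_in_Tgt: "Omega \<in> Tgt"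
  using currency by (auto simp: currency_def)

lemma Cur_subset: "C \<in> Cur \<Longrightarrow> C \<subseteq> Omega" and Tgt_subset: "V \<in> Tgt \<Longrightarrow> V \<subseteq> Omega"
  using currency by (auto simp: currency_def spec_def)

lemma Tgt_in_spec: "V \<in> Tgt \<Longrightarrow> V \<in> spec Omega" and Cur_in_spec: "C \<in> Cur \<Longrightarrow> C \<in> spec Omega"
  using currency by (auto simp: currency_def)

lemma Val_Omega: "Val Omega = 0"
  and Val_nonneg: "C \<in> Cur \<Longrightarrow> 0 \<le> Val C"
  and Val_le_iff_conv: "C \<in> Cur \<Longrightarrow> C' \<in> Cur \<Longrightarrow> Val C \<le> Val C' \<longleftrightarrow> conv T C' C"
  using value_function by (auto simp: value_function_def)

lemma Val_le_c_sup: "C \<in> Cur \<Longrightarrow> ereal (Val C) \<le> c_sup Cur Val"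
  unfolding c_sup_def by (rule SUP_upper)

lemma fair_F1:
  assumes "V \<in> Tgt" "W \<in> Tgt" "C1 \<in> Cur" "C2 \<in> Cur" "conv T (V \<inter> C1) (W \<inter> C2)"
    and "C1' \<in> Cur" "- (Val C2 - Val C1) \<le> Val C1'"
    and "ereal (Val C1') < c_sup Cur Val - ereal (Val C2 - Val C1)"
  shows "\<exists>C2'\<in>Cur. conv T (V \<inter> C1') (W \<inter> C2') \<and> Val C2' - Val C1' = Val C2 - Val C1"
  using fair assms unfolding fair_def Let_def by blast

lemma fair_F2:
  assumes "V \<in> Tgt" "W \<in> Tgt" "C1 \<in> Cur" "C2 \<in> Cur" "conv T (V \<inter> C1) (W \<inter> C2)"
    and "C2' \<in> Cur" "Val C2 - Val C1 \<le> Val C2'"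
  shows "\<exists>C1'\<in>Cur. conv T (V \<inter> C1') (W \<inter> C2') \<and> Val C2' - Val C1' = Val C2 - Val C1"
  using fair assms unfolding fair_def Let_def by blast

lemma independent_conv:
  "C \<in> Cur \<Longrightarrow> C' \<in> Cur \<Longrightarrow> V \<in> Tgt \<Longrightarrow> conv T C C' \<Longrightarrow> conv T (C \<inter> V) (C' \<inter> V)"
  and independent_nonempty: "C \<in> Cur \<Longrightarrow> V \<in> Tgt \<Longrightarrow> C \<inter> V \<noteq> {}"
  using fair by (auto simp: fair_def independent_def)

lemma loss_realised_by_currency:
  assumes "V \<in> Tgt" "C \<in> Cur" "C' \<in> Cur" "conv T C (V \<inter> C')"
  obtains C1 where "C1 \<in> Cur" "conv T C1 V" "Val C1 = Val C - Val C'"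
proof -
  have "conv T C C'" using assms(4) by (rule conv_mono_right) auto
  then have "Val C' - Val C \<le> Val Omega"
    using Val_le_iff_conv[OF assms(3,2)] Val_Omega by simp
  moreover have "conv T (Omega \<inter> C) (V \<inter> C')"
    using assms(4) Cur_subset[OF assms(2)] by (simp add: Int_absorb1)
  ultimately obtain C1 where "C1 \<in> Cur" "conv T (Omega \<inter> C1) (V \<inter> Omega)"
      "Val Omega - Val C1 = Val C' - Val C"
    using fair_F2[OF Omega_in_Tgt assms(1-3) _ Omega_in_Cur] by blast
  then show thesis
    using that Cur_subset Tgt_subset[OF assms(1)] Val_Omega by (simp add: Int_absorb1 Int_absorb2)
qed

lemma gain_realised_by_currency:
  assumes "V \<in> Tgt" "C \<in> Cur" "C' \<in> Cur" "conv T (V \<inter> C) C'"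
    and "0 \<le> Val C' - Val C" "ereal (Val C' - Val C) < c_sup Cur Val"
  obtains C2 where "C2 \<in> Cur" "conv T V C2" "Val C2 = Val C' - Val C"
proof -
  have "conv T (V \<inter> C) (Omega \<inter> C')"
    using assms(4) by (simp add: Int_absorb1[OF Cur_subset[OF assms(3)]])
  moreover have "ereal (Val Omega) < c_sup Cur Val - ereal (Val C' - Val C)"
    using assms(6) Val_Omega by (cases "c_sup Cur Val") auto
  ultimately obtain C2 where "C2 \<in> Cur" "conv T (V \<inter> Omega) (Omega \<inter> C2)"
      "Val C2 - Val Omega = Val C' - Val C"
    using fair_F1[OF assms(1) Omega_in_Tgt assms(2,3) _ Omega_in_Cur] assms(5) Val_Omega
    by auto
  then show thesis
    using that Cur_subset Tgt_subset[OF assms(1)] Val_Omega by (simp add: Int_absorb1 Int_absorb2)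
qed

theorem Cost_eq_neg_Balance_from_Omega:
  assumes "V \<in> Tgt"
  shows "Cost T Cur Val V = - Balance T Cur Val Omega V"
proof (rule antisym)
  have "Balance T Cur Val Omega V \<le> - Cost T Cur Val V"
  proof (rule Balance_least)
    fix C C' assume C: "C \<in> Cur" "C' \<in> Cur" "conv T (Omega \<inter> C) (V \<inter> C')"
    then have "conv T C (V \<inter> C')" by (simp add: Int_absorb1[OF Cur_subset])
    then obtain C1 where "C1 \<in> Cur" "conv T C1 V" "Val C1 = Val C - Val C'"
      using loss_realised_by_currency[OF assms C(1,2)] by blast
    then have "Cost T Cur Val V \<le> ereal (Val C - Val C')"
      using Cost_lower[of C1 Cur T V Val] by simp
    then show "ereal (Val C' - Val C) \<le> - Cost T Cur Val V"
      by (metis ereal_minus_le_minus ereal_uminus_uminus minus_diff_eq uminus_ereal.simps(1))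
  qed
  then show "Cost T Cur Val V \<le> - Balance T Cur Val Omega V"
    by (metis ereal_minus_le_minus ereal_uminus_uminus)
next
  show "- Balance T Cur Val Omega V \<le> Cost T Cur Val V"
  proof (rule Cost_greatest)
    fix C assume C: "C \<in> Cur" "conv T C V"
    then have "conv T (Omega \<inter> C) (V \<inter> Omega)"
      by (simp add: Int_absorb1[OF Cur_subset] Int_absorb2[OF Tgt_subset[OF assms]])
    then have "ereal (0 - Val C) \<le> Balance T Cur Val Omega V"
      using Balance_upper[OF C(1) Omega_in_Cur, where Val = Val] Val_Omega by simp
    then show "- Balance T Cur Val Omega V \<le> ereal (Val C)"
      by (metis ereal_minus_le_minus ereal_uminus_uminus diff_0 uminus_ereal.simps(1))
  qed
qed

end

locale fair_currency_resource_theory = fair_currency +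
  assumes resource_theory: "resource_theory Omega T"
begin

lemma conv_refl: "V \<in> spec Omega \<Longrightarrow> conv T V V"
  and conv_trans: "U \<in> spec Omega \<Longrightarrow> V \<in> spec Omega \<Longrightarrow> W \<in> spec Omega \<Longrightarrow>
    conv T U V \<Longrightarrow> conv T V W \<Longrightarrow> conv T U W"
  using resource_theory unfolding resource_theory_def by blast+

lemma Yield_nonneg: "V \<in> Tgt \<Longrightarrow> 0 \<le> Yield T Cur Val V"
  using Yield_upper[OF Omega_in_Cur] conv_mono_right[OF conv_refl] Tgt_in_spec Tgt_subset Val_Omega
  by (metis zero_ereal_def)

text \<open>Independence transports \<open>\<Omega> \<rightarrow> C\<close> to \<open>V \<rightarrow> V \<inter> C\<close>.\<close>
lemma conv_through_worthless_currency:
  assumes "V \<in> Tgt" "C \<in> Cur" "C' \<in> Cur" "Val C = 0" "conv T (V \<inter> C) C'"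
  shows "conv T V C'"
proof -
  have "conv T Omega C" using Val_le_iff_conv[OF assms(2) Omega_in_Cur] Val_Omega assms(4) by simp
  then have "conv T (Omega \<inter> V) (C \<inter> V)"
    using independent_conv[OF Omega_in_Cur assms(2,1)] by blast
  then have "conv T V (V \<inter> C)" using Tgt_subset[OF assms(1)] by (simp add: Int_absorb1 Int_commute)
  moreover have "V \<inter> C \<in> spec Omega"
    using independent_nonempty[OF assms(2,1)] Cur_subset[OF assms(2)] by (auto simp: spec_def)
  ultimately show ?thesis
    using conv_trans Tgt_in_spec[OF assms(1)] Cur_in_spec[OF assms(3)] assms(5) by blast
qed

theorem Yield_eq_Balance_to_Omega:
  assumes "V \<in> Tgt"
  shows "Yield T Cur Val V = Balance T Cur Val V Omega"
proof (rule antisym)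
  show "Yield T Cur Val V \<le> Balance T Cur Val V Omega"
  proof (rule Yield_least)
    fix C assume C: "C \<in> Cur" "conv T V C"
    then have "conv T (V \<inter> Omega) (Omega \<inter> C)"
      using Cur_subset Tgt_subset[OF assms] by (simp add: Int_absorb1 Int_absorb2)
    then show "ereal (Val C) \<le> Balance T Cur Val V Omega"
      using Balance_upper[OF Omega_in_Cur C(1), where Val = Val] Val_Omega by simp
  qed
next
  show "Balance T Cur Val V Omega \<le> Yield T Cur Val V"
  proof (rule Balance_least)
    fix C C' assume C: "C \<in> Cur" "C' \<in> Cur" "conv T (V \<inter> C) (Omega \<inter> C')"
    then have VC: "conv T (V \<inter> C) C'" by (simp add: Int_absorb1[OF Cur_subset])
    consider "Val C' - Val C < 0"
      | "0 \<le> Val C' - Val C" "ereal (Val C' - Val C) < c_sup Cur Val"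
      | "c_sup Cur Val \<le> ereal (Val C' - Val C)"
      by (meson linorder_not_le)
    then show "ereal (Val C' - Val C) \<le> Yield T Cur Val V"
    proof cases
      case 1
      then have "ereal (Val C' - Val C) \<le> 0" by simp
      then show ?thesis using Yield_nonneg[OF assms] by (rule order_trans)
    next
      case 2
      then obtain C2 where "C2 \<in> Cur" "conv T V C2" "Val C2 = Val C' - Val C"
        using gain_realised_by_currency[OF assms C(1,2) VC] by blast
      then show ?thesis using Yield_upper[of C2 Cur T V Val] by simp
    next
      case 3
      then have "Val C = 0"
        using Val_le_c_sup[OF C(2)] Val_nonneg[OF C(1)] by (cases "c_sup Cur Val") auto
      then have "ereal (Val C') \<le> Yield T Cur Val V"
        using Yield_upper[OF C(2)] conv_through_worthless_currency[OF assms C(1,2) _ VC] by blast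
      then show ?thesis using \<open>Val C = 0\<close> by simp
    qed
  qed
qed

end

theorem mainTheorem9:
  fixes Omega :: "'a set" and T :: "('a set \<Rightarrow> 'a set) set"
    and Cur Tgt :: "'a set set" and Val :: "'a set \<Rightarrow> real"
  assumes "resource_theory Omega T"
    and "currency Omega T Cur Tgt"
    and "value_function Omega T Cur Val"
    and "fair T Cur Tgt Val"
    and "V \<in> Tgt"
  shows "Cost T Cur Val V = - Balance T Cur Val Omega V \<and>
         Yield T Cur Val V = Balance T Cur Val V Omega"
proof -
  interpret fair_currency_resource_theory Omega T Cur Tgt Val
    using assms(1-4) by unfold_locales
  show ?thesis
    using Cost_eq_neg_Balance_from_Omega Yield_eq_Balance_to_Omega assms(5) by blast
qed

end
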